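(* In the real plane, consider the conics $$\mathcal{C}:\ y=x^2\qquad\text{and}\qquad \Gamma:\ \alpha y=x^2+\beta xy+\gamma y^2,\quad \alpha\neq 1.$$ Then there is a closed polygonal line with $n$ sides inscribed in $\Gamma$ and circumscribed about $\mathcal{C}$ if and only if the following conditions are satisfied: (a) $\alpha=\cos^2\dfrac{\pi m}{n}$, where $m,n$ are positive integers with $2m<n$; and (b) $\beta^2-4\gamma(1-\alpha)>0$.
   Context: The conics are considered in an affine chart of the real projective plane. A polygonal line $A_1A_2\dots$ is inscribed in $\Gamma$ and circumscribed about $\mathcal{C}$ if all vertices $A_i$ lie on $\Gamma$ and each side line $A_iA_{i+1}$ is tangent to $\mathcal{C}$, consecutive sides through $A_i$ being the two distinct tangent lines from $A_i$ to $\mathcal{C}$. It is closed with $n$ sides if $A_{n+1}=A_1$. *)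

theory Defs
  imports Complex_Main
begin

definition on_C :: "real \<times> real \<Rightarrow> bool" where
  "on_C p \<longleftrightarrow> snd p = (fst p)^2"

definition on_Gamma :: "real \<Rightarrow> real \<Rightarrow> real \<Rightarrow> real \<times> real \<Rightarrow> bool" where
  "on_Gamma \<alpha> \<beta> \<gamma> p \<longleftrightarrow>
     \<alpha> * snd p = (fst p)^2 + \<beta> * fst p * snd p + \<gamma> * (snd p)^2"

text \<open>The line through two points P and Q (a genuine line when P differs from Q).\<close>
definition line_thr :: "real \<times> real \<Rightarrow> real \<times> real \<Rightarrow> (real \<times> real) set" where
  "line_thr P Q = {p. \<exists>s::real. p = (fst P + s * (fst Q - fst P), snd P + s * (snd Q - snd P))}"

definition tangent_line_C :: "real \<Rightarrow> (real \<times> real) set" where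
  "tangent_line_C t = {p. snd p = 2 * t * fst p - t^2}"

definition tangent_to_C :: "(real \<times> real) set \<Rightarrow> bool" where
  "tangent_to_C L \<longleftrightarrow> (\<exists>t. L = tangent_line_C t)"

text \<open>A closed polygonal line A_1 ... A_n (A_{n+1} = A_1) inscribed in Gamma and
  circumscribed about C, encoded as an n-periodic vertex sequence: every vertex lies
  on Gamma, consecutive vertices are distinct, each side line is tangent to C, and the
  two sides through each vertex are distinct lines (the two tangents from it to C).\<close>
definition closed_poncelet_polygon ::
  "real \<Rightarrow> real \<Rightarrow> real \<Rightarrow> nat \<Rightarrow> (nat \<Rightarrow> real \<times> real) \<Rightarrow> bool" where
  "closed_poncelet_polygon \<alpha> \<beta> \<gamma> n A \<longleftrightarrow>
     (\<forall>i. A (i + n) = A i) \<and>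
     (\<forall>i. on_Gamma \<alpha> \<beta> \<gamma> (A i)) \<and>
     (\<forall>i. A i \<noteq> A (Suc i)) \<and>
     (\<forall>i. tangent_to_C (line_thr (A i) (A (Suc i)))) \<and>
     (\<forall>i. line_thr (A i) (A (Suc i)) \<noteq> line_thr (A (Suc i)) (A (Suc (Suc i))))"

end

theory Submission
  imports Defs "HOL-Analysis.Continuum_Not_Denumerable"
begin

text \<open>
  Parametrize each side line by its point of tangency (t, t^2) with C: the sides with
  parameters s and t meet at ((s + t)/2, s t). In the coordinates x = 1/s + k and
  y = 1/t + k, where k = beta/(2(1 - alpha)), this vertex lies on Gamma iff
  x^2 + y^2 - 2 c x y = K, with c = 2 alpha - 1 and
  K = (beta^2 - 4 gamma (1 - alpha))/(1 - alpha). By Vieta, the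
  coordinates of consecutive sides of a Poncelet polygon then obey
  x(i+2) = 2 c x(i+1) - x(i), and an n-periodic non-degenerate solution exists only if the
  roots of z^2 - 2 c z + 1 are n-th roots of unity other than 1 and -1, i.e.
  c = cos (2 pi m/n) with 0 < 2m < n; the form is then positive definite, forcing K > 0.
  Conversely x(i) = r cos (phi + 2 pi i m/n) with r^2 sin^2 (2 pi m/n) = K solves the
  relation, and all but countably many phases phi avoid the degenerate configurations.
\<close>

section \<open>Tangent lines of the parabola\<close>

lemma line_thr_endpoints: "P \<in> line_thr P Q" "Q \<in> line_thr P Q"
  unfolding line_thr_def by (auto intro: exI[of _ 0] exI[of _ 1])

lemma line_thr_eq_graph:
  assumes "snd P = a * fst P + b" "snd Q = a * fst Q + b" "P \<noteq> Q"
  shows "line_thr P Q = {p. snd p = a * fst p + b}"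
proof (intro equalityI subsetI)
  have "fst P \<noteq> fst Q"
    using assms by (auto simp: prod_eq_iff)
  fix p assume "p \<in> {p. snd p = a * fst p + b}"
  then have "p = (fst P + (fst p - fst P) / (fst Q - fst P) * (fst Q - fst P),
      snd P + (fst p - fst P) / (fst Q - fst P) * (snd Q - snd P))"
    using assms \<open>fst P \<noteq> fst Q\<close> by (simp add: prod_eq_iff field_simps)
  then show "p \<in> line_thr P Q"
    unfolding line_thr_def by blast
next
  fix p assume "p \<in> line_thr P Q"
  then show "p \<in> {p. snd p = a * fst p + b}"
    using assms by (auto simp: line_thr_def algebra_simps)
qed

lemma tangent_line_C_eq_graph: "tangent_line_C t = {p. snd p = 2 * t * fst p + - (t\<^sup>2)}"
  by (simp add: tangent_line_C_def)

lemma tangent_line_C_eq_iff [simp]: "tangent_line_C s = tangent_line_C t \<longleftrightarrow> s = t"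
proof
  assume eq: "tangent_line_C s = tangent_line_C t"
  have "(0, - s\<^sup>2) \<in> tangent_line_C s" "(1, 2 * s - s\<^sup>2) \<in> tangent_line_C s"
    by (auto simp: tangent_line_C_def)
  then have "s\<^sup>2 = t\<^sup>2" "2 * s - s\<^sup>2 = 2 * t - t\<^sup>2"
    unfolding eq by (auto simp: tangent_line_C_def)
  then show "s = t"
    by simp
qed simp

definition tangents_meet :: "real \<Rightarrow> real \<Rightarrow> real \<times> real" where
  "tangents_meet s t = ((s + t) / 2, s * t)"

lemma tangents_meet_commute: "tangents_meet s t = tangents_meet t s"
  by (simp add: tangents_meet_def add.commute mult.commute)

lemma tangents_meet_eq_iff: "tangents_meet s t = tangents_meet t u \<longleftrightarrow> s = u"
  by (auto simp: tangents_meet_def)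

lemma tangents_meet_in_tangent_line_C:
  "tangents_meet s t \<in> tangent_line_C s" "tangents_meet s t \<in> tangent_line_C t"
  by (auto simp: tangents_meet_def tangent_line_C_def power2_eq_square algebra_simps)

lemma tangent_line_C_Int:
  assumes "p \<in> tangent_line_C s" "p \<in> tangent_line_C t" "s \<noteq> t"
  shows "p = tangents_meet s t"
proof -
  have "snd p = 2 * s * fst p - s\<^sup>2" "snd p = 2 * t * fst p - t\<^sup>2"
    using assms by (auto simp: tangent_line_C_def)
  then have "(s - t) * (2 * fst p - (s + t)) = 0"
    by (simp add: power2_eq_square algebra_simps)
  then have "fst p = (s + t) / 2"
    using assms(3) by simp
  with \<open>snd p = 2 * s * fst p - s\<^sup>2\<close> show ?thesis
    by (simp add: tangents_meet_def prod_eq_iff power2_eq_square algebra_simps)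
qed

lemma line_thr_tangents_meet:
  assumes "s \<noteq> u"
  shows "line_thr (tangents_meet s t) (tangents_meet t u) = tangent_line_C t"
  unfolding tangent_line_C_eq_graph
  using tangents_meet_in_tangent_line_C[of s t] tangents_meet_in_tangent_line_C[of t u] assms
  by (intro line_thr_eq_graph) (auto simp: tangent_line_C_def tangents_meet_eq_iff)

text \<open>
  For the parameters x i of the side lines, x i \<noteq> x (Suc i) says that the two sides through
  a vertex are distinct, and x i \<noteq> x (Suc (Suc i)) that consecutive vertices are distinct.
\<close>

definition poncelet_chain :: "nat \<Rightarrow> ('a \<Rightarrow> 'a \<Rightarrow> bool) \<Rightarrow> (nat \<Rightarrow> 'a) \<Rightarrow> bool" where
  "poncelet_chain n R x \<longleftrightarrow>
     (\<forall>i. x (i + n) = x i) \<and> (\<forall>i. x i \<noteq> x (Suc i)) \<and> (\<forall>i. x i \<noteq> x (Suc (Suc i))) \<and>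
     (\<forall>i. R (x i) (x (Suc i)))"

lemma closed_poncelet_polygon_iff_chain:
  "(\<exists>A. closed_poncelet_polygon \<alpha> \<beta> \<gamma> n A) \<longleftrightarrow>
   (\<exists>t. poncelet_chain n (\<lambda>s t. on_Gamma \<alpha> \<beta> \<gamma> (tangents_meet s t)) t)"
proof
  assume "\<exists>A. closed_poncelet_polygon \<alpha> \<beta> \<gamma> n A"
  then obtain A where per: "\<And>i. A (i + n) = A i" and A_on_Gamma: "\<And>i. on_Gamma \<alpha> \<beta> \<gamma> (A i)"
    and vertices_ne: "\<And>i. A i \<noteq> A (Suc i)"
    and tangent: "\<And>i. tangent_to_C (line_thr (A i) (A (Suc i)))"
    and sides_ne: "\<And>i. line_thr (A i) (A (Suc i)) \<noteq> line_thr (A (Suc i)) (A (Suc (Suc i)))"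
    unfolding closed_poncelet_polygon_def by blast
  obtain t where side: "\<And>i. line_thr (A i) (A (Suc i)) = tangent_line_C (t i)"
    using tangent unfolding tangent_to_C_def by metis
  have t_ne: "t i \<noteq> t (Suc i)" for i
    using sides_ne[of i] by (simp add: side)
  have vertex: "A (Suc i) = tangents_meet (t i) (t (Suc i))" for i
    using line_thr_endpoints[where P = "A i" and Q = "A (Suc i)"]
      line_thr_endpoints[where P = "A (Suc i)" and Q = "A (Suc (Suc i))"]
    by (intro tangent_line_C_Int) (auto simp: side t_ne)
  have "poncelet_chain n (\<lambda>s t. on_Gamma \<alpha> \<beta> \<gamma> (tangents_meet s t)) t"
    unfolding poncelet_chain_def
  proof (intro conjI allI)
    fix i
    show "t (i + n) = t i"
      using side[of "i + n"] side[of i] per[of i] per[of "Suc i"] by simp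
    show "t i \<noteq> t (Suc i)"
      by (fact t_ne)
    show "t i \<noteq> t (Suc (Suc i))"
      using vertices_ne[of "Suc i"] vertex[of i] vertex[of "Suc i"] tangents_meet_commute by auto
    show "on_Gamma \<alpha> \<beta> \<gamma> (tangents_meet (t i) (t (Suc i)))"
      using A_on_Gamma[of "Suc i"] by (simp add: vertex)
  qed
  then show "\<exists>t. poncelet_chain n (\<lambda>s t. on_Gamma \<alpha> \<beta> \<gamma> (tangents_meet s t)) t"
    by blast
next
  assume "\<exists>t. poncelet_chain n (\<lambda>s t. on_Gamma \<alpha> \<beta> \<gamma> (tangents_meet s t)) t"
  then obtain t where per: "\<And>i. t (i + n) = t i" and t_ne: "\<And>i. t i \<noteq> t (Suc i)"
    and t_ne2: "\<And>i. t i \<noteq> t (Suc (Suc i))"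
    and meet_on_Gamma: "\<And>i. on_Gamma \<alpha> \<beta> \<gamma> (tangents_meet (t i) (t (Suc i)))"
    unfolding poncelet_chain_def by blast
  define A where "A i = tangents_meet (t i) (t (Suc i))" for i
  have side: "line_thr (A i) (A (Suc i)) = tangent_line_C (t (Suc i))" for i
    unfolding A_def using t_ne2 by (rule line_thr_tangents_meet)
  have "closed_poncelet_polygon \<alpha> \<beta> \<gamma> n A"
    unfolding closed_poncelet_polygon_def tangent_to_C_def side
  proof (intro conjI allI)
    fix i
    show "A (i + n) = A i"
      using per[of i] per[of "Suc i"] by (simp add: A_def)
    show "on_Gamma \<alpha> \<beta> \<gamma> (A i)"
      by (simp add: A_def meet_on_Gamma)
    show "A i \<noteq> A (Suc i)"
      using t_ne2[of i] by (simp add: A_def tangents_meet_eq_iff)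
    show "\<exists>t'. tangent_line_C (t (Suc i)) = tangent_line_C t'"
      by blast
    show "tangent_line_C (t (Suc i)) \<noteq> tangent_line_C (t (Suc (Suc i)))"
      using t_ne by simp
  qed
  then show "\<exists>A. closed_poncelet_polygon \<alpha> \<beta> \<gamma> n A"
    by blast
qed

section \<open>The vertex condition as a quadratic form\<close>

definition quad_form :: "real \<Rightarrow> real \<Rightarrow> real \<Rightarrow> real" where
  "quad_form c x y = x\<^sup>2 + y\<^sup>2 - 2 * c * x * y"

lemma quad_form_commute: "quad_form c x y = quad_form c y x"
  by (simp add: quad_form_def algebra_simps)

lemma quad_form_scale: "quad_form c (r * x) (r * y) = r\<^sup>2 * quad_form c x y"
  by (simp add: quad_form_def power2_eq_square algebra_simps)

lemma quad_form_cos: "quad_form (cos \<theta>) (cos x) (cos (x + \<theta>)) = (sin \<theta>)\<^sup>2"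
proof -
  have "(sin x)\<^sup>2 + (cos x)\<^sup>2 = 1" "(sin \<theta>)\<^sup>2 + (cos \<theta>)\<^sup>2 = 1"
    by simp_all
  then show ?thesis
    unfolding quad_form_def cos_add by algebra
qed

lemma quad_form_pos:
  assumes "c\<^sup>2 < 1" "(x, y) \<noteq> (0, 0)"
  shows "quad_form c x y > 0"
proof -
  have "quad_form c x y = (x - c * y)\<^sup>2 + (1 - c\<^sup>2) * y\<^sup>2"
    by (simp add: quad_form_def power2_eq_square algebra_simps)
  moreover have "(x - c * y)\<^sup>2 + (1 - c\<^sup>2) * y\<^sup>2 > 0"
  proof (cases "y = 0")
    case True
    then show ?thesis
      using assms(2) by simp
  next
    case False
    then have "(1 - c\<^sup>2) * y\<^sup>2 > 0"
      using assms(1) by simp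
    then show ?thesis
      by (simp add: add_nonneg_pos)
  qed
  ultimately show ?thesis
    by simp
qed

lemma quad_form_vieta:
  assumes "quad_form c x y = K" "quad_form c z y = K" "x \<noteq> z"
  shows "x + z = 2 * c * y"
proof -
  have "(x - z) * (x + z - 2 * c * y) = 0"
    using assms(1,2) unfolding quad_form_def by (simp add: power2_eq_square algebra_simps)
  then show ?thesis
    using assms(3) by simp
qed

lemma quad_form_shift:
  assumes "\<alpha> \<noteq> 1"
  shows "quad_form (2 * \<alpha> - 1) (a + \<beta> / (2 * (1 - \<alpha>))) (b + \<beta> / (2 * (1 - \<alpha>)))
      - (\<beta>\<^sup>2 - 4 * \<gamma> * (1 - \<alpha>)) / (1 - \<alpha>)
    = (a + b)\<^sup>2 + 2 * \<beta> * (a + b) + 4 * \<gamma> - 4 * \<alpha> * a * b"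
proof -
  define k where "k = \<beta> / (2 * (1 - \<alpha>))"
  have "1 - \<alpha> \<noteq> 0"
    using assms by simp
  then have \<beta>: "\<beta> = 2 * (1 - \<alpha>) * k"
    by (simp add: k_def)
  have "\<beta>\<^sup>2 = (1 - \<alpha>) * (4 * (1 - \<alpha>) * k\<^sup>2)"
    by (simp add: \<beta> power2_eq_square algebra_simps)
  then have "\<beta>\<^sup>2 / (1 - \<alpha>) = 4 * (1 - \<alpha>) * k\<^sup>2"
    using \<open>1 - \<alpha> \<noteq> 0\<close> by (metis nonzero_mult_div_cancel_left)
  then have K: "(\<beta>\<^sup>2 - 4 * \<gamma> * (1 - \<alpha>)) / (1 - \<alpha>) = 4 * (1 - \<alpha>) * k\<^sup>2 - 4 * \<gamma>"
    using \<open>1 - \<alpha> \<noteq> 0\<close> by (simp add: diff_divide_distrib)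
  show ?thesis
    unfolding K k_def[symmetric] by (simp add: \<beta> quad_form_def power2_eq_square algebra_simps)
qed

lemma on_Gamma_tangents_meet_iff:
  assumes "\<alpha> \<noteq> 1" "s \<noteq> 0" "t \<noteq> 0"
  shows "on_Gamma \<alpha> \<beta> \<gamma> (tangents_meet s t) \<longleftrightarrow>
    quad_form (2 * \<alpha> - 1) (1 / s + \<beta> / (2 * (1 - \<alpha>))) (1 / t + \<beta> / (2 * (1 - \<alpha>)))
      = (\<beta>\<^sup>2 - 4 * \<gamma> * (1 - \<alpha>)) / (1 - \<alpha>)"
proof -
  have "on_Gamma \<alpha> \<beta> \<gamma> (tangents_meet s t) \<longleftrightarrow>
      4 * \<alpha> * s * t = (s + t)\<^sup>2 + 2 * \<beta> * (s + t) * (s * t) + 4 * \<gamma> * (s * t)\<^sup>2"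
    by (auto simp: on_Gamma_def tangents_meet_def power2_eq_square field_simps)
  also have "\<dots> \<longleftrightarrow> (1 / s + 1 / t)\<^sup>2 + 2 * \<beta> * (1 / s + 1 / t) + 4 * \<gamma> - 4 * \<alpha> / (s * t) = 0"
  proof -
    have "(s + t)\<^sup>2 + 2 * \<beta> * (s + t) * (s * t) + 4 * \<gamma> * (s * t)\<^sup>2 - 4 * \<alpha> * s * t =
        (s * t)\<^sup>2 * ((1 / s + 1 / t)\<^sup>2 + 2 * \<beta> * (1 / s + 1 / t) + 4 * \<gamma> - 4 * \<alpha> / (s * t))"
      using assms(2,3) by (simp add: power2_eq_square field_simps)
    then show ?thesis
      using assms(2,3) by auto
  qed
  also have "(1 / s + 1 / t)\<^sup>2 + 2 * \<beta> * (1 / s + 1 / t) + 4 * \<gamma> - 4 * \<alpha> / (s * t) =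
      quad_form (2 * \<alpha> - 1) (1 / s + \<beta> / (2 * (1 - \<alpha>))) (1 / t + \<beta> / (2 * (1 - \<alpha>)))
      - (\<beta>\<^sup>2 - 4 * \<gamma> * (1 - \<alpha>)) / (1 - \<alpha>)"
    using quad_form_shift[OF assms(1), where a = "1 / s" and b = "1 / t"] by simp
  finally show ?thesis
    by simp
qed

lemma on_Gamma_tangents_meet_zero:
  assumes "on_Gamma \<alpha> \<beta> \<gamma> (tangents_meet s t)" "s = 0 \<or> t = 0"
  shows "s = t"
  using assms by (auto simp: on_Gamma_def tangents_meet_def)

lemma poncelet_chain_map:
  assumes "inj_on f S" "\<And>i. x i \<in> S" "\<And>a b. a \<in> S \<Longrightarrow> b \<in> S \<Longrightarrow> R' (f a) (f b) \<longleftrightarrow> R a b"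
  shows "poncelet_chain n R' (f \<circ> x) \<longleftrightarrow> poncelet_chain n R x"
proof -
  have "f (x i) = f (x j) \<longleftrightarrow> x i = x j" for i j
    using assms(1,2) by (auto dest: inj_onD)
  then show ?thesis
    by (simp add: poncelet_chain_def assms(2,3))
qed

lemma poncelet_chain_tangents_meet_iff_quad_form:
  assumes "\<alpha> \<noteq> 1"
  shows "(\<exists>t. poncelet_chain n (\<lambda>s t. on_Gamma \<alpha> \<beta> \<gamma> (tangents_meet s t)) t) \<longleftrightarrow>
    (\<exists>x. poncelet_chain n (\<lambda>x y. quad_form (2 * \<alpha> - 1) x y = (\<beta>\<^sup>2 - 4 * \<gamma> * (1 - \<alpha>)) / (1 - \<alpha>)) x
       \<and> (\<forall>i. x i \<noteq> \<beta> / (2 * (1 - \<alpha>))))"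
    (is "(\<exists>t. poncelet_chain n ?R t) \<longleftrightarrow> (\<exists>x. poncelet_chain n ?Q x \<and> (\<forall>i. x i \<noteq> ?k))")
proof -
  define f where "f s = 1 / s + ?k" for s :: real
  have f_inj: "inj_on f (- {0})"
    by (auto intro: inj_onI simp: f_def)
  have R_iff_Q: "?Q (f a) (f b) \<longleftrightarrow> ?R a b" if "a \<in> - {0}" "b \<in> - {0}" for a b
    using on_Gamma_tangents_meet_iff[OF assms] that by (simp add: f_def)
  show ?thesis
  proof
    assume "\<exists>t. poncelet_chain n ?R t"
    then obtain t where t: "poncelet_chain n ?R t"
      by blast
    have "t i \<noteq> 0" for i
      using t on_Gamma_tangents_meet_zero unfolding poncelet_chain_def by metis
    then have "poncelet_chain n ?Q (f \<circ> t)"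
      using poncelet_chain_map[where x = t and R' = ?Q and R = ?R, OF f_inj _ R_iff_Q] t by simp
    moreover have "\<forall>i. (f \<circ> t) i \<noteq> ?k"
      using \<open>\<And>i. t i \<noteq> 0\<close> by (simp add: f_def)
    ultimately show "\<exists>x. poncelet_chain n ?Q x \<and> (\<forall>i. x i \<noteq> ?k)"
      by blast
  next
    assume "\<exists>x. poncelet_chain n ?Q x \<and> (\<forall>i. x i \<noteq> ?k)"
    then obtain x where x: "poncelet_chain n ?Q x" "\<And>i. x i \<noteq> ?k"
      by blast
    define t where "t i = 1 / (x i - ?k)" for i
    have "f \<circ> t = x"
      by (simp add: fun_eq_iff f_def t_def)
    moreover have "t i \<in> - {0}" for i
      using x(2) by (simp add: t_def)
    ultimately have "poncelet_chain n ?R t"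
      using poncelet_chain_map[where x = t and R' = ?Q and R = ?R, OF f_inj _ R_iff_Q] x(1) by simp
    then show "\<exists>t. poncelet_chain n ?R t"
      by blast
  qed
qed

section \<open>Periodic solutions of a second order linear recurrence\<close>

lemma linear_rec_periodic_root_of_unity:
  fixes x :: "nat \<Rightarrow> 'a::field"
  assumes "l \<noteq> m" and rec: "\<And>i. x (i + 2) = (l + m) * x (i + 1) - l * m * x i"
    and per: "\<And>i. x (i + n) = x i" and nonzero: "x 0 \<noteq> 0 \<or> x 1 \<noteq> 0"
  shows "l ^ n = 1 \<or> m ^ n = 1"
proof (rule ccontr)
  assume "\<not> (l ^ n = 1 \<or> m ^ n = 1)"
  define u where "u i = x (i + 1) - m * x i" for i
  define v where "v i = x (i + 1) - l * x i" for i
  have "u (i + 1) = l * u i" "v (i + 1) = m * v i" for i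
    using rec[of i] by (simp_all add: u_def v_def algebra_simps numeral_2_eq_2)
  then have "u i = l ^ i * u 0" "v i = m ^ i * v 0" for i
    by (induction i) simp_all
  moreover have "u n = u 0" "v n = v 0"
    using per[of 0] per[of 1] by (simp_all add: u_def v_def)
  ultimately have "(l ^ n - 1) * u 0 = 0" "(m ^ n - 1) * v 0 = 0"
    by (metis left_diff_distrib mult_1 right_minus_eq)+
  with \<open>\<not> (l ^ n = 1 \<or> m ^ n = 1)\<close> have "u 0 = 0" "v 0 = 0"
    by simp_all
  moreover have "(l - m) * x 0 = u 0 - v 0"
    by (simp add: u_def v_def algebra_simps)
  ultimately have "(l - m) * x 0 = 0"
    by simp
  with \<open>l \<noteq> m\<close> have "x 0 = 0"
    by simp
  with \<open>u 0 = 0\<close> have "x 1 = 0"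
    by (simp add: u_def)
  with \<open>x 0 = 0\<close> nonzero show False
    by simp
qed

lemma linear_rec_periodic_cos:
  fixes x :: "nat \<Rightarrow> real"
  assumes "n > 0" "c\<^sup>2 \<noteq> 1" and rec: "\<And>i. x (i + 2) = 2 * c * x (i + 1) - x i"
    and per: "\<And>i. x (i + n) = x i" and nonzero: "x 0 \<noteq> 0 \<or> x 1 \<noteq> 0"
  shows "\<exists>k<n. c = cos (2 * pi * k / n)"
proof -
  define s where "s = csqrt (of_real (c\<^sup>2 - 1))"
  define l where "l = of_real c + s"
  define m where "m = of_real c - s"
  have "of_real (c\<^sup>2 - 1) \<noteq> (0 :: complex)"
    using \<open>c\<^sup>2 \<noteq> 1\<close> by (metis of_real_eq_0_iff right_minus_eq)
  then have "s \<noteq> 0"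
    by (simp only: s_def csqrt_eq_0 not_False_eq_True)
  then have "l \<noteq> m"
    by (simp add: l_def m_def)
  have "s\<^sup>2 = of_real (c\<^sup>2 - 1)"
    by (simp add: s_def)
  have "l * m = (of_real c)\<^sup>2 - s\<^sup>2"
    by (simp add: l_def m_def power2_eq_square algebra_simps)
  also have "\<dots> = 1"
    using \<open>s\<^sup>2 = of_real (c\<^sup>2 - 1)\<close> by simp
  finally have lm: "l * m = 1" .
  have "l + m = 2 * of_real c"
    by (simp add: l_def m_def)
  then have "of_real (x (i + 2)) = (l + m) * of_real (x (i + 1)) - l * m * of_real (x i)" for i
    using rec[of i] by (simp add: lm)
  then have "l ^ n = 1 \<or> m ^ n = 1"
    by (rule linear_rec_periodic_root_of_unity[OF \<open>l \<noteq> m\<close>]) (use per nonzero in simp_all)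
  moreover have "inverse l = m" "inverse m = l"
    using lm by (simp_all add: inverse_unique mult.commute)
  ultimately obtain z :: complex where "z ^ n = 1" "z + inverse z = 2 * of_real c"
    using \<open>l + m = 2 * of_real c\<close> by (metis add.commute)
  from \<open>z ^ n = 1\<close> obtain k where "k < n" "z = cis (2 * pi * k / n)"
    using bij_betw_roots_unity[OF \<open>n > 0\<close>] unfolding bij_betw_def by auto
  have "Re (z + inverse z) = 2 * cos (2 * pi * k / n)"
    using \<open>z = cis (2 * pi * k / n)\<close> by simp
  moreover have "Re (z + inverse z) = 2 * c"
    using \<open>z + inverse z = 2 * of_real c\<close> by simp
  ultimately show ?thesis
    using \<open>k < n\<close> by auto
qed

lemma linear_rec_minus_one_periodic:
  fixes x :: "nat \<Rightarrow> real"
  assumes "n > 0" and rec: "\<And>i. x (i + 2) = - 2 * x (i + 1) - x i"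
    and per: "\<And>i. x (i + n) = x i"
  shows "x i = (- 1) ^ i * x 0"
proof -
  define e where "e i = (- 1) ^ i * x i" for i
  have "e (i + 2) = 2 * e (i + 1) - e i" for i
  proof -
    have "e (i + 2) = (- 1) ^ i * (- 2 * x (i + 1) - x i)"
      unfolding e_def rec by simp
    also have "\<dots> = 2 * e (i + 1) - e i"
      by (simp add: e_def algebra_simps)
    finally show ?thesis .
  qed
  then have e_step: "e (i + 1) - e i = e 1 - e 0" for i
    by (induction i) (simp_all add: numeral_2_eq_2)
  have e_affine: "e i = e 0 + i * (e 1 - e 0)" for i
  proof (induction i)
    case (Suc i)
    have "real (Suc i) * (e 1 - e 0) = i * (e 1 - e 0) + (e 1 - e 0)"
      by (simp add: algebra_simps)
    with Suc e_step[of i] show ?case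
      by simp
  qed simp
  have "x (0 + n + n) = x 0"
    by (simp only: per)
  then have "e (2 * n) = e 0"
    by (simp add: e_def power_mult mult_2)
  with e_affine[of "2 * n"] \<open>n > 0\<close> have "e 1 = e 0"
    by simp
  with e_affine[of i] have "(- 1) ^ i * x i = x 0"
    by (simp add: e_def)
  moreover have "(- 1) ^ i * (- 1) ^ i = (1 :: real)"
    by (simp flip: power_mult_distrib)
  ultimately show ?thesis
    by (metis mult.assoc mult_1)
qed

lemma cos_two_pi_fraction_reduce:
  fixes k n :: nat
  assumes "k < n" "c = cos (2 * pi * k / n)" "c \<noteq> 1" "c \<noteq> - 1"
  shows "\<exists>m. 0 < m \<and> 2 * m < n \<and> c = cos (2 * pi * m / n)"
proof -
  have "k \<noteq> 0"
  proof
    assume "k = 0"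
    with assms(2,3) show False
      by simp
  qed
  have "2 * k \<noteq> n"
  proof
    assume "2 * k = n"
    then have "2 * pi * k / n = pi"
      using \<open>k \<noteq> 0\<close> by (simp flip: \<open>2 * k = n\<close>)
    with assms(2,4) show False
      by simp
  qed
  show ?thesis
  proof (cases "2 * k < n")
    case True
    with \<open>k \<noteq> 0\<close> assms(2) show ?thesis
      by (intro exI[of _ k]) simp
  next
    case False
    have "2 * pi * real (n - k) / n = 2 * pi - 2 * pi * k / n"
      using assms(1) by (simp add: field_simps)
    then have "cos (2 * pi * real (n - k) / n) = c"
      by (simp add: assms(2))
    moreover have "0 < n - k" "2 * (n - k) < n"
      using False \<open>2 * k \<noteq> n\<close> assms(1) by auto
    ultimately show ?thesis
      by metis
  qed
qed

lemma quad_form_chain_necessary: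
  assumes "n > 0" "c \<noteq> 1" "poncelet_chain n (\<lambda>x y. quad_form c x y = K) x"
  shows "(\<exists>m. 0 < m \<and> 2 * m < n \<and> c = cos (2 * pi * m / n)) \<and> K > 0"
proof -
  have per: "\<And>i. x (i + n) = x i" and ne: "\<And>i. x i \<noteq> x (Suc i)"
    and ne2: "\<And>i. x i \<noteq> x (Suc (Suc i))" and rel: "\<And>i. quad_form c (x i) (x (Suc i)) = K"
    using assms(3) unfolding poncelet_chain_def by blast+
  have rec: "x (i + 2) = 2 * c * x (i + 1) - x i" for i
    using quad_form_vieta[OF rel[of i] _ ne2[of i]] rel[of "Suc i"] by (simp add: quad_form_commute)
  have "c \<noteq> - 1"
  proof
    assume "c = - 1"
    then have "x 2 = x 0"
      using linear_rec_minus_one_periodic[of n x 2] \<open>n > 0\<close> per rec by simp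
    with ne2[of 0] show False
      by (simp add: numeral_2_eq_2)
  qed
  with \<open>c \<noteq> 1\<close> have "c\<^sup>2 \<noteq> 1"
    by (simp add: power2_eq_1_iff)
  moreover have "x 0 \<noteq> 0 \<or> x 1 \<noteq> 0"
    using ne[of 0] by auto
  ultimately obtain k where "k < n" "c = cos (2 * pi * k / n)"
    using linear_rec_periodic_cos[of n c x] \<open>n > 0\<close> rec per by blast
  then have "\<exists>m. 0 < m \<and> 2 * m < n \<and> c = cos (2 * pi * m / n)"
    using cos_two_pi_fraction_reduce \<open>c \<noteq> 1\<close> \<open>c \<noteq> - 1\<close> by blast
  moreover have "c\<^sup>2 \<le> 1"
    unfolding abs_square_le_1 \<open>c = cos (2 * pi * k / n)\<close> by (rule abs_cos_le_one)
  with \<open>c\<^sup>2 \<noteq> 1\<close> have "c\<^sup>2 < 1"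
    by simp
  then have "K > 0"
    using quad_form_pos[of c "x 0" "x 1"] rel[of 0] ne[of 0] by auto
  ultimately show ?thesis
    by blast
qed

section \<open>Construction of closed chains\<close>

lemma countable_sin_eq_0_affine:
  assumes "a \<noteq> 0"
  shows "countable {x :: real. sin (a * x + b) = 0}"
proof -
  have "{x. sin (a * x + b) = 0} \<subseteq> range (\<lambda>i :: int. (of_int i * pi - b) / a)"
  proof
    fix x assume "x \<in> {x. sin (a * x + b) = 0}"
    then obtain i :: int where "a * x + b = of_int i * pi"
      by (auto simp: sin_zero_iff_int2)
    then have "x = (of_int i * pi - b) / a"
      using assms by (simp add: field_simps)
    then show "x \<in> range (\<lambda>i :: int. (of_int i * pi - b) / a)"
      by blast
  qed
  then show ?thesis
    by (rule countable_subset) simp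
qed

lemma countable_cos_eq_const: "countable {x :: real. cos (x + p) = v}"
proof (cases "\<bar>v\<bar> \<le> 1")
  case True
  define q where "q = arccos v"
  have diff: "cos (x + p) - v = 2 * sin (1 / 2 * x + (p + q) / 2) * sin (- 1 / 2 * x + (q - p) / 2)" for x
  proof -
    have args: "(x + p + q) / 2 = 1 / 2 * x + (p + q) / 2" "(q - (x + p)) / 2 = - 1 / 2 * x + (q - p) / 2"
      by (simp_all add: field_simps)
    have "cos (x + p) - v = cos (x + p) - cos q"
      using True by (simp add: q_def)
    also have "\<dots> = 2 * sin ((x + p + q) / 2) * sin ((q - (x + p)) / 2)"
      by (rule cos_diff_cos)
    finally show ?thesis
      by (simp only: args)
  qed
  have "{x. cos (x + p) = v} \<subseteq>
      {x. sin (1 / 2 * x + (p + q) / 2) = 0} \<union> {x. sin (- 1 / 2 * x + (q - p) / 2) = 0}"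
  proof
    fix x assume "x \<in> {x. cos (x + p) = v}"
    then have "2 * sin (1 / 2 * x + (p + q) / 2) * sin (- 1 / 2 * x + (q - p) / 2) = 0"
      using diff[of x] by simp
    then show "x \<in> {x. sin (1 / 2 * x + (p + q) / 2) = 0} \<union> {x. sin (- 1 / 2 * x + (q - p) / 2) = 0}"
      by simp
  qed
  then show ?thesis
    by (rule countable_subset) (intro countable_Un countable_sin_eq_0_affine; simp)
next
  case False
  then have "{x. cos (x + p) = v} = {}"
    using abs_cos_le_one by force
  then show ?thesis
    by simp
qed

lemma countable_cos_eq_shift:
  assumes "sin (\<delta> / 2) \<noteq> 0"
  shows "countable {x :: real. cos (x + p) = cos (x + p + \<delta>)}"
proof -
  have diff: "cos (x + p) - cos (x + p + \<delta>) = 2 * sin (1 * x + (p + \<delta> / 2)) * sin (\<delta> / 2)" for x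
    using cos_diff_cos[of "x + p" "x + p + \<delta>"] by (simp add: field_simps)
  have "{x. cos (x + p) = cos (x + p + \<delta>)} \<subseteq> {x. sin (1 * x + (p + \<delta> / 2)) = 0}"
  proof
    fix x assume "x \<in> {x. cos (x + p) = cos (x + p + \<delta>)}"
    then have "2 * sin (1 * x + (p + \<delta> / 2)) * sin (\<delta> / 2) = 0"
      using diff[of x] by simp
    with assms show "x \<in> {x. sin (1 * x + (p + \<delta> / 2)) = 0}"
      by simp
  qed
  then show ?thesis
    by (rule countable_subset) (intro countable_sin_eq_0_affine; simp)
qed

lemma generic_phase_exists:
  fixes \<theta> w :: real
  assumes "sin \<theta> \<noteq> 0" "sin (\<theta> / 2) \<noteq> 0"
  obtains \<phi> where "\<And>i :: nat. cos (\<phi> + i * \<theta>) \<noteq> w"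
    "\<And>i :: nat. cos (\<phi> + i * \<theta>) \<noteq> cos (\<phi> + i * \<theta> + \<theta>)"
    "\<And>i :: nat. cos (\<phi> + i * \<theta>) \<noteq> cos (\<phi> + i * \<theta> + 2 * \<theta>)"
proof -
  define bad where "bad = (\<Union>i :: nat. {\<phi>. cos (\<phi> + i * \<theta>) = w}
    \<union> {\<phi>. cos (\<phi> + i * \<theta>) = cos (\<phi> + i * \<theta> + \<theta>)}
    \<union> {\<phi>. cos (\<phi> + i * \<theta>) = cos (\<phi> + i * \<theta> + 2 * \<theta>)})"
  have "countable bad"
    unfolding bad_def using assms
    by (intro countable_UN countable_Un countable_cos_eq_const countable_cos_eq_shift) auto
  then have "bad \<noteq> UNIV"
    using uncountable_UNIV_real by auto
  then obtain \<phi> where "\<phi> \<notin> bad"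
    by auto
  then show thesis
    using that by (auto simp: bad_def)
qed

lemma quad_form_chain_exists:
  fixes m n :: nat
  assumes "0 < m" "2 * m < n" "c = cos (2 * pi * m / n)" "K > 0"
  shows "\<exists>x. poncelet_chain n (\<lambda>x y. quad_form c x y = K) x \<and> (\<forall>i. x i \<noteq> v)"
proof -
  define \<theta> where "\<theta> = 2 * pi * m / n"
  have "0 < \<theta>" "\<theta> < pi"
    using assms(1,2) by (simp_all add: \<theta>_def field_simps flip: of_nat_mult)
  then have "sin \<theta> > 0" "sin (\<theta> / 2) > 0"
    by (simp_all add: sin_gt_zero)
  define r where "r = sqrt K / sin \<theta>"
  have "r > 0" "r\<^sup>2 * (sin \<theta>)\<^sup>2 = K"
    using \<open>K > 0\<close> \<open>sin \<theta> > 0\<close> by (simp_all add: r_def power_divide)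
  obtain \<phi> where avoid_v: "\<And>i :: nat. cos (\<phi> + i * \<theta>) \<noteq> v / r"
    and ne: "\<And>i :: nat. cos (\<phi> + i * \<theta>) \<noteq> cos (\<phi> + i * \<theta> + \<theta>)"
    and ne2: "\<And>i :: nat. cos (\<phi> + i * \<theta>) \<noteq> cos (\<phi> + i * \<theta> + 2 * \<theta>)"
    using generic_phase_exists[of \<theta> "v / r"] \<open>sin \<theta> > 0\<close> \<open>sin (\<theta> / 2) > 0\<close> by (metis less_irrefl)
  define x where "x i = r * cos (\<phi> + i * \<theta>)" for i :: nat
  have x_Suc: "x (Suc i) = r * cos (\<phi> + i * \<theta> + \<theta>)"
    and x_Suc_Suc: "x (Suc (Suc i)) = r * cos (\<phi> + i * \<theta> + 2 * \<theta>)" for i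
    by (simp_all add: x_def algebra_simps)
  have "poncelet_chain n (\<lambda>x y. quad_form c x y = K) x"
    unfolding poncelet_chain_def
  proof (intro conjI allI)
    fix i
    have "cos (y + real (2 * m) * pi) = cos y" for y
      by (simp only: cos_add cos_npi sin_npi) (simp add: power_mult)
    moreover have "\<phi> + real (i + n) * \<theta> = \<phi> + i * \<theta> + real (2 * m) * pi"
      using assms(2) by (simp add: \<theta>_def field_simps)
    ultimately show "x (i + n) = x i"
      by (simp only: x_def)
    show "x i \<noteq> x (Suc i)"
      using ne[of i] \<open>r > 0\<close> by (simp add: x_def[of i] x_Suc)
    show "x i \<noteq> x (Suc (Suc i))"
      using ne2[of i] \<open>r > 0\<close> by (simp add: x_def[of i] x_Suc_Suc)
    have "quad_form c (x i) (x (Suc i)) = r\<^sup>2 * quad_form (cos \<theta>) (cos (\<phi> + i * \<theta>)) (cos (\<phi> + i * \<theta> + \<theta>))"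
      using assms(3) by (simp only: x_def[of i] x_Suc quad_form_scale flip: \<theta>_def)
    also have "\<dots> = K"
      by (simp add: quad_form_cos \<open>r\<^sup>2 * (sin \<theta>)\<^sup>2 = K\<close>)
    finally show "quad_form c (x i) (x (Suc i)) = K" .
  qed
  moreover have "x i \<noteq> v" for i
    using avoid_v[of i] \<open>r > 0\<close> by (auto simp: x_def field_simps)
  ultimately show ?thesis
    by blast
qed

lemma quad_form_chain_iff:
  assumes "n > 0" "c \<noteq> 1"
  shows "(\<exists>x. poncelet_chain n (\<lambda>x y. quad_form c x y = K) x \<and> (\<forall>i. x i \<noteq> v)) \<longleftrightarrow>
    (\<exists>m. 0 < m \<and> 2 * m < n \<and> c = cos (2 * pi * m / n)) \<and> K > 0"
  using quad_form_chain_necessary[OF assms] quad_form_chain_exists by blast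

lemma double_angle_condition_iff:
  fixes \<alpha> D :: real and n :: nat
  assumes "\<alpha> \<noteq> 1"
  shows "((\<exists>m :: nat. 0 < m \<and> 2 * m < n \<and> 2 * \<alpha> - 1 = cos (2 * pi * m / n)) \<and> D / (1 - \<alpha>) > 0) \<longleftrightarrow>
    ((\<exists>m :: nat. 0 < m \<and> 2 * m < n \<and> \<alpha> = (cos (pi * m / n))\<^sup>2) \<and> D > 0)"
proof -
  have cos_iff: "2 * \<alpha> - 1 = cos (2 * x) \<longleftrightarrow> \<alpha> = (cos x)\<^sup>2" for x
    using cos_double_cos[of x] by (auto simp: field_simps)
  have "D / (1 - \<alpha>) > 0 \<longleftrightarrow> D > 0" if "\<alpha> = (cos x)\<^sup>2" for x
  proof -
    have "1 - \<alpha> > 0"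
      using that assms abs_cos_le_one[of x] by (simp add: abs_square_le_1 less_le)
    then show ?thesis
      by (simp add: zero_less_divide_iff)
  qed
  moreover have "2 * pi * real m / real n = 2 * (pi * m / n)" for m
    by simp
  ultimately show ?thesis
    using cos_iff by metis
qed

theorem theorem2p7:
  fixes \<alpha> \<beta> \<gamma> :: real and n :: nat
  assumes "\<alpha> \<noteq> 1" and "n > 0"
  shows "(\<exists>A. closed_poncelet_polygon \<alpha> \<beta> \<gamma> n A) \<longleftrightarrow>
         ((\<exists>m::nat. m > 0 \<and> 2 * m < n \<and> \<alpha> = (cos (pi * real m / real n))^2) \<and>
          \<beta>^2 - 4 * \<gamma> * (1 - \<alpha>) > 0)"
proof -
  let ?K = "(\<beta>\<^sup>2 - 4 * \<gamma> * (1 - \<alpha>)) / (1 - \<alpha>)"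
  have "(\<exists>A. closed_poncelet_polygon \<alpha> \<beta> \<gamma> n A) \<longleftrightarrow>
      (\<exists>x. poncelet_chain n (\<lambda>x y. quad_form (2 * \<alpha> - 1) x y = ?K) x \<and> (\<forall>i. x i \<noteq> \<beta> / (2 * (1 - \<alpha>))))"
    unfolding closed_poncelet_polygon_iff_chain poncelet_chain_tangents_meet_iff_quad_form[OF assms(1)] ..
  also have "\<dots> \<longleftrightarrow> (\<exists>m::nat. 0 < m \<and> 2 * m < n \<and> 2 * \<alpha> - 1 = cos (2 * pi * m / n)) \<and> ?K > 0"
    using assms by (intro quad_form_chain_iff) simp_all
  also have "\<dots> \<longleftrightarrow> (\<exists>m::nat. m > 0 \<and> 2 * m < n \<and> \<alpha> = (cos (pi * real m / real n))^2) \<and>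
      \<beta>^2 - 4 * \<gamma> * (1 - \<alpha>) > 0"
    by (rule double_angle_condition_iff[OF assms(1)])
  finally show ?thesis .
qed

end
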